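(* Let $H,H^{(p)}$ ($p\in\mathbb N$) be coding functions and let $r,r_p\in(0,\infty)$ with $r<\Gamma(H)$ and $r_p<\Gamma(H^{(p)})$ for each $p$. Assume: (i) $\{s\ge0:H_s=\Gamma(H)\}=\{S(H)\}$; (ii) $H_s>\Gamma(H)-r$ for all $s\in(\sigma^-_r(H),\sigma^+_r(H))$; (iii) $H^{(p)}\to H$ uniformly on compacts, $\zeta(H^{(p)})\to\zeta(H)$ and $r_p\to r$. Then $S(H^{(p)})\to S(H)$, $\sigma^-_{r_p}(H^{(p)})\to\sigma^-_r(H)$, $\sigma^+_{r_p}(H^{(p)})\to\sigma^+_r(H)$; moreover $\Theta_{r_p}(H^{(p)})\to\Theta_r(H)$ uniformly on compacts and $\zeta(\Theta_{r_p}(H^{(p)}))\to\zeta(\Theta_r(H))$.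
   Context: A coding function is a continuous $H:\mathbb R_+\to\mathbb R_+$ with compact support, $H_0=0$, not identically zero. $\zeta(H)=\sup\{t:H_t>0\}$, $\Gamma(H)=\sup H$, $S(H)=\inf\{t\ge0:H_t=\Gamma(H)\}$. For $r\in(0,\Gamma(H))$: $\sigma^-_r(H)=\sup\{t\in[0,S(H)]:H_t<\Gamma(H)-r\}$, $\sigma^+_r(H)=\inf\{t\ge S(H):H_t<\Gamma(H)-r\}$, and $\Theta_r(H)(t)=H\big((\sigma^-_r(H)+t)\wedge\sigma^+_r(H)\big)-\Gamma(H)+r$ for $t\ge0$. *)

theory Defs
  imports "HOL-Analysis.Analysis"
begin

text \<open>Functions on R_+ are modelled as real \<Rightarrow> real; only values at t \<ge> 0 matter.\<close>

definition coding_function :: "(real \<Rightarrow> real) \<Rightarrow> bool" where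
  "coding_function H \<longleftrightarrow>
     continuous_on {0..} H \<and> (\<forall>t\<ge>0. H t \<ge> 0) \<and> H 0 = 0 \<and>
     compact (closure {t\<in>{0..}. H t \<noteq> 0}) \<and> (\<exists>t\<ge>0. H t \<noteq> 0)"

definition zeta :: "(real \<Rightarrow> real) \<Rightarrow> real" where
  "zeta H = Sup {t. t \<ge> 0 \<and> H t > 0}"

definition Gamma_max :: "(real \<Rightarrow> real) \<Rightarrow> real" where
  "Gamma_max H = Sup (H ` {0..})"

definition S_arg :: "(real \<Rightarrow> real) \<Rightarrow> real" where
  "S_arg H = Inf {t. t \<ge> 0 \<and> H t = Gamma_max H}"

definition sigma_minus :: "real \<Rightarrow> (real \<Rightarrow> real) \<Rightarrow> real" where
  "sigma_minus r H = Sup {t \<in> {0..S_arg H}. H t < Gamma_max H - r}"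

definition sigma_plus :: "real \<Rightarrow> (real \<Rightarrow> real) \<Rightarrow> real" where
  "sigma_plus r H = Inf {t. t \<ge> S_arg H \<and> H t < Gamma_max H - r}"

definition Theta :: "real \<Rightarrow> (real \<Rightarrow> real) \<Rightarrow> real \<Rightarrow> real" where
  "Theta r H t = H (min (sigma_minus r H + t) (sigma_plus r H)) - Gamma_max H + r"

end

theory Submission
  imports Defs
begin

text \<open>
  Uniform convergence on compacts, together with the confinement of all supports to a fixed compact
  interval, gives \<open>\<Gamma>(H\<^sub>p) \<longrightarrow> \<Gamma>(H)\<close>. Since \<open>H\<close> attains its maximum only at \<open>S(H)\<close>, it
  stays a positive distance below \<open>\<Gamma>(H)\<close> off any neighbourhood of \<open>S(H)\<close>, which forces
  \<open>S(H\<^sub>p) \<longrightarrow> S(H)\<close>. Likewise, on each compact subinterval of \<open>(\<sigma>\<^sup>-\<^sub>r(H), \<sigma>\<^sup>+\<^sub>r(H))\<close>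
  the function \<open>H\<close> stays a positive distance above the level \<open>\<Gamma>(H) - r\<close>, so eventually \<open>H\<^sub>p\<close>
  lies above its own level \<open>\<Gamma>(H\<^sub>p) - r\<^sub>p\<close> there; this bounds \<open>\<sigma>\<^sup>\<plusminus>\<^bsub>r\<^sub>p\<^esub>(H\<^sub>p)\<close>
  from the inside, while points just outside the interval where \<open>H\<close> is below its level bound them
  from the outside. Uniform convergence of \<open>\<Theta>\<close> then follows from uniform continuity of \<open>H\<close> on
  compacts, and \<open>\<zeta>(\<Theta>\<^sub>r(H)) = \<sigma>\<^sup>+\<^sub>r(H) - \<sigma>\<^sup>-\<^sub>r(H)\<close> is approached from below by points
  where \<open>H\<^sub>p\<close> lies above its level.
\<close>

lemma continuous_on_compact_gt_gap:
  fixes g :: "'a::topological_space \<Rightarrow> real"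
  assumes "compact K" "continuous_on K g" "\<And>x. x \<in> K \<Longrightarrow> c < g x"
  obtains \<delta> where "\<delta> > 0" "\<And>x. x \<in> K \<Longrightarrow> c + \<delta> \<le> g x"
proof (cases "K = {}")
  case True
  then show ?thesis using that[of 1] by auto
next
  case False
  then obtain x0 where "x0 \<in> K" "\<And>x. x \<in> K \<Longrightarrow> g x0 \<le> g x"
    using continuous_attains_inf[OF assms(1) False assms(2)] by blast
  then show ?thesis using that[of "g x0 - c"] assms(3) by force
qed

lemma uniform_limit_const_tendsto:
  "(c \<longlongrightarrow> l) F \<Longrightarrow> uniform_limit X (\<lambda>n x. c n) (\<lambda>x. l) F"
  by (simp add: uniform_limit_iff tendsto_iff)

lemma uniform_limit_min_shift:
  fixes a b :: "'i \<Rightarrow> real"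
  assumes "(a \<longlongrightarrow> a0) F" "(b \<longlongrightarrow> b0) F"
  shows "uniform_limit X (\<lambda>n t. min (a n + t) (b n)) (\<lambda>t. min (a0 + t) b0) F"
proof (rule uniform_limitI)
  fix e :: real assume "0 < e"
  with assms have "\<forall>\<^sub>F n in F. dist (a n) a0 < e \<and> dist (b n) b0 < e"
    by (intro eventually_conj) (auto simp: tendsto_iff)
  then show "\<forall>\<^sub>F n in F. \<forall>t\<in>X. dist (min (a n + t) (b n)) (min (a0 + t) b0) < e"
    by eventually_elim (auto simp: dist_real_def min_def abs_less_iff)
qed

lemma uniform_limit_compose_uniform_limit:
  fixes f :: "'i \<Rightarrow> 'a::metric_space \<Rightarrow> 'b::metric_space"
  assumes "uniform_limit B f g F" "uniformly_continuous_on B g" "closed B"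
    and "uniform_limit A h k F" "\<forall>\<^sub>F n in F. \<forall>y\<in>A. h n y \<in> B"
  shows "uniform_limit A (\<lambda>n y. f n (h n y)) (\<lambda>y. g (k y)) F"
proof (rule uniform_limitI)
  fix e :: real assume "0 < e"
  have "\<forall>\<^sub>F n in F. \<forall>y\<in>A. dist (g (h n y)) (g (k y)) < e / 2"
    by (rule uniform_limitD[OF uniform_limit_compose_uniformly_continuous_on[OF assms(4,2,5,3)]])
      (use \<open>0 < e\<close> in simp)
  moreover have "\<forall>\<^sub>F n in F. \<forall>x\<in>B. dist (f n x) (g x) < e / 2"
    by (rule uniform_limitD[OF assms(1)]) (use \<open>0 < e\<close> in simp)
  ultimately show "\<forall>\<^sub>F n in F. \<forall>y\<in>A. dist (f n (h n y)) (g (k y)) < e"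
    using assms(5)
  proof eventually_elim
    case (elim n)
    show ?case
    proof
      fix y assume "y \<in> A"
      with elim have "dist (f n (h n y)) (g (h n y)) < e / 2" "dist (g (k y)) (g (h n y)) < e / 2"
        by (auto simp: dist_commute)
      then show "dist (f n (h n y)) (g (k y)) < e" by (rule dist_triangle_half_l)
    qed
  qed
qed

context
  fixes f :: "real \<Rightarrow> real"
  assumes coding: "coding_function f"
begin

lemma coding_continuous: "continuous_on {0..} f"
  and coding_nonneg: "t \<ge> 0 \<Longrightarrow> f t \<ge> 0"
  and coding_at_0: "f 0 = 0"
  using coding unfolding coding_function_def by auto

lemma coding_positive_somewhere: "\<exists>t\<ge>0. f t > 0"
proof -
  obtain t where "t \<ge> 0" "f t \<noteq> 0" using coding unfolding coding_function_def by blast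
  then show ?thesis using coding_nonneg[of t] by (intro exI[of _ t]) simp
qed

lemma bdd_above_coding_positive: "bdd_above {t. t \<ge> 0 \<and> f t > 0}"
proof -
  have "{t. t \<ge> 0 \<and> f t > 0} \<subseteq> closure {t\<in>{0..}. f t \<noteq> 0}"
    using closure_subset by fastforce
  moreover have "bounded (closure {t\<in>{0..}. f t \<noteq> 0})"
    using coding unfolding coding_function_def by (auto intro: compact_imp_bounded)
  ultimately show ?thesis
    by (meson bounded_imp_bdd_above bdd_above_mono)
qed

lemma le_zeta: "t \<ge> 0 \<Longrightarrow> f t > 0 \<Longrightarrow> t \<le> zeta f"
  unfolding zeta_def by (rule cSup_upper) (use bdd_above_coding_positive in auto)

lemma zeta_pos: "zeta f > 0"
proof -
  obtain t where t: "t \<ge> 0" "f t > 0" using coding_positive_somewhere by blast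
  moreover have "t \<noteq> 0" using t coding_at_0 by auto
  ultimately show ?thesis using le_zeta[OF t] by linarith
qed

lemma coding_vanishes_beyond_zeta: "t > zeta f \<Longrightarrow> f t = 0"
  using le_zeta[of t] coding_nonneg[of t] zeta_pos by force

lemma Gamma_max_attained: "\<exists>m. 0 \<le> m \<and> m \<le> zeta f \<and> f m = Gamma_max f"
  and le_Gamma_max: "t \<ge> 0 \<Longrightarrow> f t \<le> Gamma_max f"
proof -
  have nonempty: "{0..zeta f} \<noteq> {}" using zeta_pos by auto
  obtain m where m: "m \<in> {0..zeta f}" "\<forall>t\<in>{0..zeta f}. f t \<le> f m"
    using continuous_attains_sup[OF compact_Icc nonempty continuous_on_subset[OF coding_continuous]]
    by auto
  have max: "f t \<le> f m" if "t \<ge> 0" for t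
  proof (cases "t \<le> zeta f")
    case True
    then show ?thesis using m(2) that by simp
  next
    case False
    then show ?thesis using coding_vanishes_beyond_zeta[of t] coding_nonneg[of m] m(1) by simp
  qed
  have "Gamma_max f = f m"
    unfolding Gamma_max_def by (rule cSup_eq_maximum) (use m(1) max in auto)
  then show "\<exists>m. 0 \<le> m \<and> m \<le> zeta f \<and> f m = Gamma_max f" using m(1) by auto
  show "t \<ge> 0 \<Longrightarrow> f t \<le> Gamma_max f" using max \<open>Gamma_max f = f m\<close> by simp
qed

lemma Gamma_max_pos: "Gamma_max f > 0"
  using coding_positive_somewhere le_Gamma_max by fastforce

lemma S_arg_attains: "f (S_arg f) = Gamma_max f"
  and S_arg_nonneg: "0 \<le> S_arg f"
proof -
  let ?A = "{t. t \<ge> 0 \<and> f t = Gamma_max f}"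
  have "?A = {0..} \<inter> f -` {Gamma_max f}" by auto
  then have "closed ?A" using continuous_closed_preimage[OF coding_continuous] by simp
  moreover have "?A \<noteq> {}" using Gamma_max_attained by auto
  ultimately have "Inf ?A \<in> ?A" by (intro closed_contains_Inf) (auto simp: bdd_below_def)
  then show "f (S_arg f) = Gamma_max f" "0 \<le> S_arg f" unfolding S_arg_def by auto
qed

lemma S_arg_le_zeta: "S_arg f \<le> zeta f"
  using le_zeta[OF S_arg_nonneg] S_arg_attains Gamma_max_pos by auto

end

context
  fixes f :: "real \<Rightarrow> real" and r :: real
  assumes coding: "coding_function f" and r_pos: "0 < r" and r_less: "r < Gamma_max f"
begin

lemma le_sigma_minus:
  "0 \<le> t \<Longrightarrow> t \<le> S_arg f \<Longrightarrow> f t < Gamma_max f - r \<Longrightarrow> t \<le> sigma_minus r f"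
  unfolding sigma_minus_def by (rule cSup_upper) (auto intro: bdd_aboveI[of _ "S_arg f"])

lemma zero_in_sigma_minus_set: "0 \<in> {t \<in> {0..S_arg f}. f t < Gamma_max f - r}"
  using coding_at_0[OF coding] S_arg_nonneg[OF coding] r_less by auto

lemma sigma_minus_least:
  "(\<And>t. 0 \<le> t \<Longrightarrow> t \<le> S_arg f \<Longrightarrow> f t < Gamma_max f - r \<Longrightarrow> t \<le> B) \<Longrightarrow> sigma_minus r f \<le> B"
  unfolding sigma_minus_def by (rule cSup_least) (use zero_in_sigma_minus_set in auto)

lemma sigma_minus_nonneg: "0 \<le> sigma_minus r f"
  using le_sigma_minus zero_in_sigma_minus_set by auto

lemma sigma_minus_approx:
  assumes "a < sigma_minus r f"
  obtains t where "0 \<le> t" "t \<le> S_arg f" "f t < Gamma_max f - r" "a < t"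
  using less_cSupD[of "{t \<in> {0..S_arg f}. f t < Gamma_max f - r}" a] zero_in_sigma_minus_set
    assms that unfolding sigma_minus_def by fastforce

lemma sigma_minus_level: "f (sigma_minus r f) \<le> Gamma_max f - r"
proof -
  let ?L = "{t \<in> {0..S_arg f}. f t < Gamma_max f - r}"
  have "closure ?L \<subseteq> {0..}" by (rule closure_minimal) auto
  then have "continuous_on (closure ?L) f"
    by (rule continuous_on_subset[OF coding_continuous[OF coding]])
  moreover have "sigma_minus r f \<in> closure ?L"
    unfolding sigma_minus_def using zero_in_sigma_minus_set
    by (intro closure_contains_Sup) (auto intro: bdd_aboveI[of _ "S_arg f"])
  ultimately show ?thesis by (rule continuous_le_on_closure) auto
qed

lemma sigma_minus_less_S_arg: "sigma_minus r f < S_arg f"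
proof -
  have "sigma_minus r f \<le> S_arg f" by (rule sigma_minus_least) auto
  moreover have "sigma_minus r f \<noteq> S_arg f"
    using sigma_minus_level S_arg_attains[OF coding] r_pos by auto
  ultimately show ?thesis by simp
qed

lemma sigma_plus_le:
  "S_arg f \<le> t \<Longrightarrow> f t < Gamma_max f - r \<Longrightarrow> sigma_plus r f \<le> t"
  unfolding sigma_plus_def by (rule cInf_lower) (auto intro: bdd_belowI[of _ "S_arg f"])

lemma beyond_zeta_in_sigma_plus_set: "zeta f + 1 \<in> {t. S_arg f \<le> t \<and> f t < Gamma_max f - r}"
  using S_arg_le_zeta[OF coding] coding_vanishes_beyond_zeta[OF coding, of "zeta f + 1"] r_less
  by auto

lemma sigma_plus_greatest:
  "(\<And>t. S_arg f \<le> t \<Longrightarrow> f t < Gamma_max f - r \<Longrightarrow> B \<le> t) \<Longrightarrow> B \<le> sigma_plus r f"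
  unfolding sigma_plus_def by (rule cInf_greatest) (use beyond_zeta_in_sigma_plus_set in auto)

lemma sigma_plus_approx:
  assumes "sigma_plus r f < a"
  obtains t where "S_arg f \<le> t" "f t < Gamma_max f - r" "t < a"
  using cInf_lessD[of "{t. S_arg f \<le> t \<and> f t < Gamma_max f - r}" a] beyond_zeta_in_sigma_plus_set
    assms that unfolding sigma_plus_def by fastforce

lemma sigma_plus_level: "f (sigma_plus r f) \<le> Gamma_max f - r"
proof -
  let ?L = "{t. S_arg f \<le> t \<and> f t < Gamma_max f - r}"
  have "closure ?L \<subseteq> {0..}"
    using S_arg_nonneg[OF coding] by (intro closure_minimal) auto
  then have "continuous_on (closure ?L) f"
    by (rule continuous_on_subset[OF coding_continuous[OF coding]])
  moreover have "sigma_plus r f \<in> closure ?L"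
    unfolding sigma_plus_def using beyond_zeta_in_sigma_plus_set
    by (intro closure_contains_Inf) (auto intro: bdd_belowI[of _ "S_arg f"])
  ultimately show ?thesis by (rule continuous_le_on_closure) auto
qed

lemma S_arg_less_sigma_plus: "S_arg f < sigma_plus r f"
proof -
  have "S_arg f \<le> sigma_plus r f" by (rule sigma_plus_greatest) auto
  moreover have "sigma_plus r f \<noteq> S_arg f"
    using sigma_plus_level S_arg_attains[OF coding] r_pos by auto
  ultimately show ?thesis by simp
qed

lemma Theta_pos_imp_less: "0 < Theta r f t \<Longrightarrow> t < sigma_plus r f - sigma_minus r f"
  using sigma_plus_level unfolding Theta_def by (cases "sigma_minus r f + t < sigma_plus r f") auto

lemma zeta_Theta_le: "zeta (Theta r f) \<le> sigma_plus r f - sigma_minus r f"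
proof -
  have "0 < Theta r f (S_arg f - sigma_minus r f)"
    using sigma_minus_less_S_arg S_arg_less_sigma_plus S_arg_attains[OF coding] r_pos
    by (simp add: Theta_def)
  moreover have "0 \<le> S_arg f - sigma_minus r f" using sigma_minus_less_S_arg by simp
  ultimately have "{t. 0 \<le> t \<and> 0 < Theta r f t} \<noteq> {}" by blast
  then show ?thesis
    unfolding zeta_def by (rule cSup_least) (auto dest: Theta_pos_imp_less)
qed

lemma le_zeta_Theta:
  assumes "0 \<le> t" "sigma_minus r f + t \<le> sigma_plus r f" "Gamma_max f - r < f (sigma_minus r f + t)"
  shows "t \<le> zeta (Theta r f)"
  unfolding zeta_def
proof (rule cSup_upper)
  show "t \<in> {t. 0 \<le> t \<and> 0 < Theta r f t}" using assms by (simp add: Theta_def)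
  show "bdd_above {t. 0 \<le> t \<and> 0 < Theta r f t}"
    by (rule bdd_aboveI[of _ "sigma_plus r f - sigma_minus r f"]) (auto dest: Theta_pos_imp_less)
qed

lemma zeta_Theta_eq:
  assumes "\<And>s. s \<in> {sigma_minus r f <..< sigma_plus r f} \<Longrightarrow> f s > Gamma_max f - r"
  shows "zeta (Theta r f) = sigma_plus r f - sigma_minus r f"
proof (rule antisym[OF zeta_Theta_le])
  show "sigma_plus r f - sigma_minus r f \<le> zeta (Theta r f)"
  proof (rule dense_le_bounded)
    show "0 < sigma_plus r f - sigma_minus r f"
      using sigma_minus_less_S_arg S_arg_less_sigma_plus by simp
  next
    fix t assume "0 < t" "t < sigma_plus r f - sigma_minus r f"
    then show "t \<le> zeta (Theta r f)" by (intro le_zeta_Theta assms) auto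
  qed
qed

end

locale coding_convergence =
  fixes H :: "real \<Rightarrow> real" and Hp :: "nat \<Rightarrow> real \<Rightarrow> real"
  assumes coding_limit: "coding_function H"
    and coding_seq: "\<And>p. coding_function (Hp p)"
    and uniform_on_compacts: "\<And>T. uniform_limit {0..T} Hp H sequentially"
    and zeta_converges: "(\<lambda>p. zeta (Hp p)) \<longlonglongrightarrow> zeta H"
begin

lemma pointwise_converges: "(\<lambda>p. Hp p t) \<longlonglongrightarrow> H t" if "0 \<le> t"
  using that by (intro tendsto_uniform_limitI[OF uniform_on_compacts[of t]]) auto

lemma eventually_uniformly_close:
  "e > 0 \<Longrightarrow> \<forall>\<^sub>F p in sequentially. \<forall>t\<in>{0..T}. \<bar>Hp p t - H t\<bar> < e"
  using uniform_limitD[OF uniform_on_compacts] by (simp add: dist_real_def)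

lemma Gamma_max_converges: "(\<lambda>p. Gamma_max (Hp p)) \<longlonglongrightarrow> Gamma_max H"
  unfolding tendsto_iff dist_real_def
proof (intro allI impI)
  fix e :: real assume "e > 0"
  define Z where "Z = zeta H + 1"
  have "\<forall>\<^sub>F p in sequentially. zeta (Hp p) < Z \<and> (\<forall>t\<in>{0..Z}. \<bar>Hp p t - H t\<bar> < e / 2)"
    using order_tendstoD(2)[OF zeta_converges, of Z] eventually_uniformly_close[of "e / 2" Z] \<open>e > 0\<close>
    by (auto simp: Z_def intro: eventually_conj)
  then show "\<forall>\<^sub>F p in sequentially. \<bar>Gamma_max (Hp p) - Gamma_max H\<bar> < e"
  proof eventually_elim
    case (elim p)
    obtain m where m: "0 \<le> m" "m \<le> zeta (Hp p)" "Hp p m = Gamma_max (Hp p)"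
      using Gamma_max_attained[OF coding_seq] by blast
    have S: "S_arg H \<in> {0..Z}"
      using S_arg_nonneg[OF coding_limit] S_arg_le_zeta[OF coding_limit] by (simp add: Z_def)
    have "m \<in> {0..Z}" using elim m by auto
    then have "\<bar>Hp p m - H m\<bar> < e / 2" using elim by blast
    then have upper: "Gamma_max (Hp p) < Gamma_max H + e / 2"
      using m(3) le_Gamma_max[OF coding_limit \<open>0 \<le> m\<close>] by linarith
    have "\<bar>Hp p (S_arg H) - H (S_arg H)\<bar> < e / 2" using elim S by blast
    then have lower: "Gamma_max H < Gamma_max (Hp p) + e / 2"
      using S_arg_attains[OF coding_limit] le_Gamma_max[OF coding_seq S_arg_nonneg[OF coding_limit], of p]
      by linarith
    show ?case using upper lower by linarith
  qed
qed

lemma S_arg_converges: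
  assumes unique_max: "{s. s \<ge> 0 \<and> H s = Gamma_max H} = {S_arg H}"
  shows "(\<lambda>p. S_arg (Hp p)) \<longlonglongrightarrow> S_arg H"
  unfolding tendsto_iff dist_real_def
proof (intro allI impI)
  fix e :: real assume "e > 0"
  define Z where "Z = zeta H + 1"
  define K where "K = {0..Z} \<inter> ({..S_arg H - e} \<union> {S_arg H + e..})"
  have "compact K" unfolding K_def by (intro compact_Int_closed closed_Un) auto
  moreover have "continuous_on K (\<lambda>t. Gamma_max H - H t)"
    by (intro continuous_intros continuous_on_subset[OF coding_continuous[OF coding_limit]])
      (auto simp: K_def)
  moreover have "0 < Gamma_max H - H t" if "t \<in> K" for t
  proof -
    have "0 \<le> t" "t \<noteq> S_arg H" using that \<open>e > 0\<close> by (auto simp: K_def)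
    then have "H t \<noteq> Gamma_max H" using unique_max by blast
    then show ?thesis using le_Gamma_max[OF coding_limit \<open>0 \<le> t\<close>] by simp
  qed
  ultimately obtain d where d: "d > 0" "\<And>t. t \<in> K \<Longrightarrow> d \<le> Gamma_max H - H t"
    by (metis add_0 continuous_on_compact_gt_gap)
  have "\<forall>\<^sub>F p in sequentially. \<bar>Gamma_max (Hp p) - Gamma_max H\<bar> < d / 2"
    using tendstoD[OF Gamma_max_converges, of "d / 2"] d(1) by (simp add: dist_real_def)
  then have "\<forall>\<^sub>F p in sequentially. zeta (Hp p) < Z \<and> (\<forall>t\<in>{0..Z}. \<bar>Hp p t - H t\<bar> < d / 2)
      \<and> \<bar>Gamma_max (Hp p) - Gamma_max H\<bar> < d / 2"
    using order_tendstoD(2)[OF zeta_converges, of Z] eventually_uniformly_close[of "d / 2" Z] d(1)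
    by (auto simp: Z_def intro!: eventually_conj)
  then show "\<forall>\<^sub>F p in sequentially. \<bar>S_arg (Hp p) - S_arg H\<bar> < e"
  proof eventually_elim
    case (elim p)
    have "S_arg (Hp p) \<in> {0..Z}"
      using elim S_arg_nonneg[OF coding_seq] S_arg_le_zeta[OF coding_seq, of p] by auto
    moreover have "Hp p (S_arg (Hp p)) = Gamma_max (Hp p)" by (rule S_arg_attains[OF coding_seq])
    moreover have "\<bar>Hp p (S_arg (Hp p)) - H (S_arg (Hp p))\<bar> < d / 2"
      using elim \<open>S_arg (Hp p) \<in> {0..Z}\<close> by blast
    ultimately have "Gamma_max H - H (S_arg (Hp p)) < d"
      using elim by linarith
    then have "S_arg (Hp p) \<notin> K" using d(2) by force
    then show ?case using \<open>S_arg (Hp p) \<in> {0..Z}\<close> by (auto simp: K_def)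
  qed
qed

end

locale level_convergence = coding_convergence +
  fixes r :: real and rp :: "nat \<Rightarrow> real"
  assumes r_pos: "0 < r" and r_less: "r < Gamma_max H"
    and rp_pos: "\<And>p. 0 < rp p" and rp_less: "\<And>p. rp p < Gamma_max (Hp p)"
    and unique_max: "{s. s \<ge> 0 \<and> H s = Gamma_max H} = {S_arg H}"
    and above_level: "\<And>s. s \<in> {sigma_minus r H <..< sigma_plus r H} \<Longrightarrow> H s > Gamma_max H - r"
    and r_converges: "rp \<longlonglongrightarrow> r"
begin

lemma level_converges: "(\<lambda>p. Gamma_max (Hp p) - rp p) \<longlonglongrightarrow> Gamma_max H - r"
  by (intro tendsto_diff Gamma_max_converges r_converges)

lemma eventually_below_level:
  assumes "0 \<le> t" "H t < Gamma_max H - r"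
  shows "\<forall>\<^sub>F p in sequentially. Hp p t < Gamma_max (Hp p) - rp p"
proof -
  have "(\<lambda>p. Hp p t - (Gamma_max (Hp p) - rp p)) \<longlonglongrightarrow> H t - (Gamma_max H - r)"
    by (intro tendsto_diff pointwise_converges level_converges assms(1))
  from order_tendstoD(2)[OF this, of 0] assms(2) show ?thesis by simp
qed

lemma eventually_above_level:
  assumes "e > 0"
  shows "\<forall>\<^sub>F p in sequentially. \<forall>t\<in>{sigma_minus r H + e .. sigma_plus r H - e}.
           Gamma_max (Hp p) - rp p < Hp p t"
proof -
  let ?K = "{sigma_minus r H + e .. sigma_plus r H - e}"
  have "?K \<subseteq> {0..}" using sigma_minus_nonneg[OF coding_limit r_pos r_less] assms by auto
  then have "continuous_on ?K H" by (rule continuous_on_subset[OF coding_continuous[OF coding_limit]])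
  moreover have "Gamma_max H - r < H t" if "t \<in> ?K" for t
    using that assms by (intro above_level) auto
  ultimately obtain d where d: "d > 0" "\<And>t. t \<in> ?K \<Longrightarrow> Gamma_max H - r + d \<le> H t"
    using continuous_on_compact_gt_gap[OF compact_Icc] by metis
  have "\<forall>\<^sub>F p in sequentially. \<forall>t\<in>{0..sigma_plus r H}. \<bar>Hp p t - H t\<bar> < d / 2"
    using eventually_uniformly_close[of "d / 2" "sigma_plus r H"] d(1) by simp
  moreover have "\<forall>\<^sub>F p in sequentially. \<bar>(Gamma_max (Hp p) - rp p) - (Gamma_max H - r)\<bar> < d / 2"
    using tendstoD[OF level_converges, of "d / 2"] d(1) by (simp add: dist_real_def)
  ultimately show ?thesis
  proof eventually_elim
    case (elim p)
    show ?case
    proof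
      fix t assume "t \<in> ?K"
      then have "t \<in> {0..sigma_plus r H}" using \<open>?K \<subseteq> {0..}\<close> assms by auto
      then have "\<bar>Hp p t - H t\<bar> < d / 2" using elim by blast
      then show "Gamma_max (Hp p) - rp p < Hp p t" using elim d(2)[OF \<open>t \<in> ?K\<close>] by linarith
    qed
  qed
qed

lemma sigma_minus_converges: "(\<lambda>p. sigma_minus (rp p) (Hp p)) \<longlonglongrightarrow> sigma_minus r H"
proof (rule order_tendstoI)
  fix a assume "a < sigma_minus r H"
  then obtain t where t: "0 \<le> t" "t \<le> S_arg H" "H t < Gamma_max H - r" "a < t"
    by (rule sigma_minus_approx[OF coding_limit r_pos r_less])
  have "t < S_arg H"
    using le_sigma_minus[OF coding_limit r_pos r_less t(1-3)]
      sigma_minus_less_S_arg[OF coding_limit r_pos r_less] by linarith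
  with S_arg_converges[OF unique_max] have "\<forall>\<^sub>F p in sequentially. t < S_arg (Hp p)"
    by (rule order_tendstoD)
  then show "\<forall>\<^sub>F p in sequentially. a < sigma_minus (rp p) (Hp p)"
    using eventually_below_level[OF t(1,3)]
  proof eventually_elim
    case (elim p)
    then show ?case using le_sigma_minus[OF coding_seq rp_pos rp_less t(1)] t(4) by force
  qed
next
  fix a assume "sigma_minus r H < a"
  define e where "e = min (a - sigma_minus r H) (sigma_plus r H - S_arg H) / 2"
  have e: "0 < e" "sigma_minus r H + e < a" "S_arg H < sigma_plus r H - e"
    using \<open>sigma_minus r H < a\<close> S_arg_less_sigma_plus[OF coding_limit r_pos r_less]
    by (auto simp: e_def min_def field_simps)
  from S_arg_converges[OF unique_max] e(3) have "\<forall>\<^sub>F p in sequentially. S_arg (Hp p) < sigma_plus r H - e"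
    by (rule order_tendstoD)
  then show "\<forall>\<^sub>F p in sequentially. sigma_minus (rp p) (Hp p) < a"
    using eventually_above_level[OF e(1)]
  proof eventually_elim
    case (elim p)
    have "sigma_minus (rp p) (Hp p) \<le> sigma_minus r H + e"
    proof (rule sigma_minus_least[OF coding_seq rp_pos rp_less])
      fix t assume t: "0 \<le> t" "t \<le> S_arg (Hp p)" "Hp p t < Gamma_max (Hp p) - rp p"
      show "t \<le> sigma_minus r H + e"
      proof (rule ccontr)
        assume "\<not> t \<le> sigma_minus r H + e"
        then have "t \<in> {sigma_minus r H + e .. sigma_plus r H - e}" using t(2) elim(1) by auto
        then show False using elim(2) t(3) by fastforce
      qed
    qed
    then show ?case using e(2) by linarith
  qed
qed

lemma sigma_plus_converges: "(\<lambda>p. sigma_plus (rp p) (Hp p)) \<longlonglongrightarrow> sigma_plus r H"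
proof (rule order_tendstoI)
  fix a assume "a < sigma_plus r H"
  define e where "e = min (sigma_plus r H - a) (S_arg H - sigma_minus r H) / 2"
  have e: "0 < e" "a < sigma_plus r H - e" "sigma_minus r H + e < S_arg H"
    using \<open>a < sigma_plus r H\<close> sigma_minus_less_S_arg[OF coding_limit r_pos r_less]
    by (auto simp: e_def min_def field_simps)
  from S_arg_converges[OF unique_max] e(3) have "\<forall>\<^sub>F p in sequentially. sigma_minus r H + e < S_arg (Hp p)"
    by (rule order_tendstoD)
  then show "\<forall>\<^sub>F p in sequentially. a < sigma_plus (rp p) (Hp p)"
    using eventually_above_level[OF e(1)]
  proof eventually_elim
    case (elim p)
    have "sigma_plus r H - e \<le> sigma_plus (rp p) (Hp p)"
    proof (rule sigma_plus_greatest[OF coding_seq rp_pos rp_less])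
      fix t assume t: "S_arg (Hp p) \<le> t" "Hp p t < Gamma_max (Hp p) - rp p"
      show "sigma_plus r H - e \<le> t"
      proof (rule ccontr)
        assume "\<not> sigma_plus r H - e \<le> t"
        then have "t \<in> {sigma_minus r H + e .. sigma_plus r H - e}" using t(1) elim(1) by auto
        then show False using elim(2) t(2) by fastforce
      qed
    qed
    then show ?case using e(2) by linarith
  qed
next
  fix a assume "sigma_plus r H < a"
  then obtain t where t: "S_arg H \<le> t" "H t < Gamma_max H - r" "t < a"
    by (rule sigma_plus_approx[OF coding_limit r_pos r_less])
  have "S_arg H < t"
    using t(1,2) S_arg_attains[OF coding_limit] r_pos by (cases "t = S_arg H") auto
  have "0 \<le> t" using t(1) S_arg_nonneg[OF coding_limit] by linarith
  from S_arg_converges[OF unique_max] \<open>S_arg H < t\<close>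
  have "\<forall>\<^sub>F p in sequentially. S_arg (Hp p) < t"
    by (rule order_tendstoD)
  then show "\<forall>\<^sub>F p in sequentially. sigma_plus (rp p) (Hp p) < a"
    using eventually_below_level[OF \<open>0 \<le> t\<close> t(2)]
  proof eventually_elim
    case (elim p)
    then show ?case using sigma_plus_le[OF coding_seq rp_pos rp_less, of p t] t(3) by force
  qed
qed

end

context level_convergence
begin

lemma Theta_uniform_limit:
  "uniform_limit {0..T} (\<lambda>p. Theta (rp p) (Hp p)) (Theta r H) sequentially"
proof -
  define B where "B = sigma_plus r H + 1"
  have "uniformly_continuous_on {0..B} H"
    by (intro compact_uniformly_continuous continuous_on_subset[OF coding_continuous[OF coding_limit]])
      auto
  moreover have "uniform_limit {0..T}
      (\<lambda>p t. min (sigma_minus (rp p) (Hp p) + t) (sigma_plus (rp p) (Hp p)))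
      (\<lambda>t. min (sigma_minus r H + t) (sigma_plus r H)) sequentially"
    by (intro uniform_limit_min_shift sigma_minus_converges sigma_plus_converges)
  moreover have "\<forall>\<^sub>F p in sequentially. sigma_plus (rp p) (Hp p) < B"
    using order_tendstoD(2)[OF sigma_plus_converges] by (simp add: B_def)
  then have "\<forall>\<^sub>F p in sequentially. \<forall>t\<in>{0..T}.
      min (sigma_minus (rp p) (Hp p) + t) (sigma_plus (rp p) (Hp p)) \<in> {0..B}"
  proof eventually_elim
    case (elim p)
    have "0 \<le> sigma_minus (rp p) (Hp p)" "0 \<le> sigma_plus (rp p) (Hp p)"
      using sigma_minus_nonneg[OF coding_seq rp_pos rp_less, of p]
        S_arg_less_sigma_plus[OF coding_seq rp_pos rp_less, of p] S_arg_nonneg[OF coding_seq, of p]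
      by linarith+
    then show ?case using elim by auto
  qed
  ultimately have "uniform_limit {0..T}
      (\<lambda>p t. Hp p (min (sigma_minus (rp p) (Hp p) + t) (sigma_plus (rp p) (Hp p))))
      (\<lambda>t. H (min (sigma_minus r H + t) (sigma_plus r H))) sequentially"
    using uniform_limit_compose_uniform_limit[OF uniform_on_compacts] by blast
  then have "uniform_limit {0..T}
      (\<lambda>p t. Hp p (min (sigma_minus (rp p) (Hp p) + t) (sigma_plus (rp p) (Hp p)))
        - (Gamma_max (Hp p) - rp p))
      (\<lambda>t. H (min (sigma_minus r H + t) (sigma_plus r H)) - (Gamma_max H - r)) sequentially"
    by (intro uniform_limit_minus uniform_limit_const_tendsto level_converges)
  then show ?thesis by (simp add: Theta_def[abs_def] algebra_simps)
qed

lemma zeta_Theta_converges: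
  "(\<lambda>p. zeta (Theta (rp p) (Hp p))) \<longlonglongrightarrow> zeta (Theta r H)"
proof -
  have "(\<lambda>p. zeta (Theta (rp p) (Hp p))) \<longlonglongrightarrow> sigma_plus r H - sigma_minus r H"
  proof (rule order_tendstoI)
    fix a assume "a < sigma_plus r H - sigma_minus r H"
    define e where "e = min (sigma_plus r H - sigma_minus r H - a) (sigma_plus r H - sigma_minus r H) / 2"
    define u where "u = sigma_plus r H - e"
    have e: "0 < e" "u \<in> {sigma_minus r H + e .. sigma_plus r H - e}" "sigma_minus r H < u - a"
        "u < sigma_plus r H"
      using \<open>a < sigma_plus r H - sigma_minus r H\<close> sigma_minus_less_S_arg[OF coding_limit r_pos r_less]
        S_arg_less_sigma_plus[OF coding_limit r_pos r_less]
      by (auto simp: e_def u_def min_def field_simps)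
    have "\<forall>\<^sub>F p in sequentially. Gamma_max (Hp p) - rp p < Hp p u"
      using eventually_above_level[OF e(1)] by eventually_elim (use e(2) in blast)
    moreover have "\<forall>\<^sub>F p in sequentially. u < sigma_plus (rp p) (Hp p)"
      using order_tendstoD(1)[OF sigma_plus_converges e(4)] .
    moreover have "\<forall>\<^sub>F p in sequentially. sigma_minus (rp p) (Hp p) < min u (u - a)"
      by (rule order_tendstoD(2)[OF sigma_minus_converges]) (use e in auto)
    ultimately show "\<forall>\<^sub>F p in sequentially. a < zeta (Theta (rp p) (Hp p))"
    proof eventually_elim
      case (elim p)
      have "u - sigma_minus (rp p) (Hp p) \<le> zeta (Theta (rp p) (Hp p))"
        using elim by (intro le_zeta_Theta[OF coding_seq rp_pos rp_less]) auto
      then show ?case using elim by linarith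
    qed
  next
    fix a assume "sigma_plus r H - sigma_minus r H < a"
    with tendsto_diff[OF sigma_plus_converges sigma_minus_converges]
    have "\<forall>\<^sub>F p in sequentially. sigma_plus (rp p) (Hp p) - sigma_minus (rp p) (Hp p) < a"
      by (rule order_tendstoD)
    then show "\<forall>\<^sub>F p in sequentially. zeta (Theta (rp p) (Hp p)) < a"
    proof eventually_elim
      case (elim p)
      then show ?case using zeta_Theta_le[OF coding_seq rp_pos rp_less, of p] by linarith
    qed
  qed
  then show ?thesis using zeta_Theta_eq[OF coding_limit r_pos r_less above_level] by simp
qed

end

theorem lemma4p2:
  fixes H :: "real \<Rightarrow> real" and Hp :: "nat \<Rightarrow> real \<Rightarrow> real"
    and r :: real and rp :: "nat \<Rightarrow> real"
  assumes cH: "coding_function H"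
    and cHp: "\<And>p. coding_function (Hp p)"
    and r_pos: "0 < r" and r_lt: "r < Gamma_max H"
    and rp_pos: "\<And>p. 0 < rp p" and rp_lt: "\<And>p. rp p < Gamma_max (Hp p)"
    and uniq_max: "{s. s \<ge> 0 \<and> H s = Gamma_max H} = {S_arg H}"
    and above: "\<And>s. s \<in> {sigma_minus r H <..< sigma_plus r H} \<Longrightarrow> H s > Gamma_max H - r"
    and conv_H: "\<And>T. uniform_limit {0..T} Hp H sequentially"
    and conv_zeta: "(\<lambda>p. zeta (Hp p)) \<longlonglongrightarrow> zeta H"
    and conv_r: "rp \<longlonglongrightarrow> r"
  shows "((\<lambda>p. S_arg (Hp p)) \<longlonglongrightarrow> S_arg H)
    \<and> ((\<lambda>p. sigma_minus (rp p) (Hp p)) \<longlonglongrightarrow> sigma_minus r H)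
    \<and> ((\<lambda>p. sigma_plus (rp p) (Hp p)) \<longlonglongrightarrow> sigma_plus r H)
    \<and> (\<forall>T. uniform_limit {0..T} (\<lambda>p. Theta (rp p) (Hp p)) (Theta r H) sequentially)
    \<and> ((\<lambda>p. zeta (Theta (rp p) (Hp p))) \<longlonglongrightarrow> zeta (Theta r H))"
proof -
  interpret level_convergence H Hp r rp
    by unfold_locales (fact assms)+
  show ?thesis
    using S_arg_converges[OF uniq_max] sigma_minus_converges sigma_plus_converges
      Theta_uniform_limit zeta_Theta_converges
    by blast
qed

end
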